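(* Let $N\ge2$, $\hbar>0$, and for $n\ge1$ define operators $A_n(u)$ ($u\in\mathbb{C}$) acting on functions of $x_1,\dots,x_n$ recursively by $A_{-1}(u)=0$, $A_0(u)=1$, $A_n(u)=(u-p_n)A_{n-1}(u)-e^{x_{n-1}-x_n}A_{n-2}(u)$, where $p_n=-\imath\hbar\,\partial/\partial x_n$. For a function $f$ on $\mathbb{R}^{N-1}$ not growing too fast at infinity and $v\in\mathbb{C}$ let $$(\mathcal{Q}^{(N)}_vf)(x_1,\dots,x_N)=\int_{\mathbb{R}^{N-1}}Q^{(N)}_v(x;y)f(y_1,\dots,y_{N-1})\,dy_1\cdots dy_{N-1},$$ $$Q^{(N)}_v(x;y)=\exp\Big\{\frac{\imath v}{\hbar}\Big(\sum_{i=1}^Nx_i-\sum_{i=1}^{N-1}y_i\Big)-\frac1\hbar\sum_{i=1}^{N-1}\big(e^{x_i-y_i}+e^{y_i-x_{i+1}}\big)\Big\}.$$ Then $$A_N(u)\circ\mathcal{Q}^{(N)}_v=(u-v)\,\mathcal{Q}^{(N)}_v\circ A_{N-1}(u),$$ where on the left $A_N(u)$ acts in the variables $x_1,\dots,x_N$ and on the right $A_{N-1}(u)$ acts in the variables $y_1,\dots,y_{N-1}$.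
   Context: $A_N(u)=\det(u-L_N)$ is the generating function $\sum_{n=0}^N(-1)^nu^{N-n}H^{(N)}_n$ of the commuting Hamiltonians of the $N$-particle open Toda chain, $L_N$ being the tridiagonal Lax matrix with diagonal $p_1,\dots,p_N$, superdiagonal entries $1$ and subdiagonal entries $e^{x_i-x_{i+1}}$. *)

theory Defs
  imports "HOL-Analysis.Analysis"
begin

text \<open>Functions of the variables x_1, x_2, ... are modelled as maps
  (nat \<Rightarrow> real) \<Rightarrow> complex; coordinate x_k is x k (k \<ge> 1).\<close>

type_synonym fn = "(nat \<Rightarrow> real) \<Rightarrow> complex"

definition pd :: "nat \<Rightarrow> fn \<Rightarrow> fn" where
  "pd k g = (\<lambda>x. vector_derivative (\<lambda>t. g (x(k := t))) (at (x k)))"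

fun pds :: "nat list \<Rightarrow> fn \<Rightarrow> fn" where
  "pds [] g = g"
| "pds (k # ks) g = pd k (pds ks g)"

fun Aop :: "real \<Rightarrow> nat \<Rightarrow> complex \<Rightarrow> fn \<Rightarrow> fn" where
  "Aop h 0 u g = g"
| "Aop h (Suc 0) u g = (\<lambda>x. u * g x + \<i> * of_real h * pd 1 g x)"
| "Aop h (Suc (Suc n)) u g =
     (\<lambda>x. u * Aop h (Suc n) u g x + \<i> * of_real h * pd (Suc (Suc n)) (Aop h (Suc n) u g) x
          - of_real (exp (x (Suc n) - x (Suc (Suc n)))) * Aop h n u g x)"

definition Qker :: "real \<Rightarrow> nat \<Rightarrow> complex \<Rightarrow> (nat \<Rightarrow> real) \<Rightarrow> (nat \<Rightarrow> real) \<Rightarrow> complex" where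
  "Qker h N v x y = exp ((\<i> * v / of_real h) * of_real ((\<Sum>i=1..N. x i) - (\<Sum>i=1..<N. y i))
      - of_real ((1 / h) * (\<Sum>i=1..<N. exp (x i - y i) + exp (y i - x (Suc i)))))"

definition Qop :: "real \<Rightarrow> nat \<Rightarrow> complex \<Rightarrow> fn \<Rightarrow> fn" where
  "Qop h N v f = (\<lambda>x. \<integral>y. Qker h N v x y * f y \<partial>(PiM {1..<N} (\<lambda>_. lborel)))"

end

theory Submission
  imports Defs "HOL-Real_Asymp.Real_Asymp" "HOL-Probability.Distributions"
begin

text \<open>The kernel is \<open>Q = exp Z\<close> with \<open>Z\<close> affine in the \<open>x k\<close> and \<open>y k\<close> apart from the
  exponentials \<open>e^(x k - y k)\<close> and \<open>e^(y k - x (k + 1))\<close>. Hence a momentum \<open>p k\<close> acting on \<open>Q\<close>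
  in \<open>x k\<close>, or moved onto \<open>Q\<close> from \<open>f\<close> in \<open>y k\<close> by integration by parts (the boundary terms
  vanish since \<open>Q\<close> decays doubly exponentially in \<open>y k\<close>), becomes multiplication by a function of
  \<open>x\<close> and \<open>y\<close>. Under the integral, \<open>A_N(u) Q = Q P_N\<close> and \<open>Q A_(N-1)(u) = Q T_(N-1)\<close>, where
  \<open>P_n\<close> and \<open>T_n\<close> are continuants in \<open>\<alpha> k = \<i> e^(x k - y k)\<close> and \<open>\<beta> k = \<i> e^(y k - x (k + 1))\<close>:
  the potentials factor as \<open>e^(x k - x (k + 1)) = - \<alpha> k \<beta> k\<close> and
  \<open>e^(y k - y (k + 1)) = - \<beta> k \<alpha> (k + 1)\<close>. Finally \<open>P_n = T_n - \<beta> n T_(n-1)\<close>, and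
  \<open>\<alpha> N = \<beta> N = 0\<close> gives \<open>P_N = (u - v) T_(N-1)\<close>.\<close>

section \<open>Analysis on lines and on products of lines\<close>

lemma integral_lborel_derivative_eq_0:
  fixes f F :: "real \<Rightarrow> 'a::euclidean_space"
  assumes "\<And>t. (F has_vector_derivative f t) (at t)"
    and "continuous_on UNIV f" "integrable lborel f"
    and "(F \<longlongrightarrow> 0) at_top" "(F \<longlongrightarrow> 0) at_bot"
  shows "integral\<^sup>L lborel f = 0"
proof -
  have "(LBINT t=-\<infinity>..\<infinity>. f t) = 0 - 0"
    by (rule interval_integral_FTC_integrable)
      (use assms in \<open>auto simp: ereal_tendsto_simps1 set_integrable_def continuous_on_eq_continuous_at\<close>)
  then show ?thesis
    by (simp add: interval_lebesgue_integral_def set_lebesgue_integral_def)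
qed

lemma has_vector_derivative_iff_difference_quotient:
  fixes F :: "real \<Rightarrow> 'a::real_normed_vector"
  shows "(F has_vector_derivative D) (at t) \<longleftrightarrow>
    ((\<lambda>s. inverse (s - t) *\<^sub>R (F s - F t)) \<longlongrightarrow> D) (at t)"
proof -
  have "norm (F s - F t - (s - t) *\<^sub>R D) / norm (s - t) = norm (inverse (s - t) *\<^sub>R (F s - F t) - D)"
    if "s \<noteq> t" for s
  proof -
    have "inverse (s - t) *\<^sub>R (F s - F t) - D = inverse (s - t) *\<^sub>R (F s - F t - (s - t) *\<^sub>R D)"
      using that by (simp add: scaleR_diff_right)
    then show ?thesis by (simp add: divide_inverse_commute)
  qed
  then have "((\<lambda>s. norm (F s - F t - (s - t) *\<^sub>R D) / norm (s - t)) \<longlongrightarrow> 0) (at t) \<longleftrightarrow>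
      ((\<lambda>s. norm (inverse (s - t) *\<^sub>R (F s - F t) - D)) \<longlongrightarrow> 0) (at t)"
    by (intro tendsto_cong) (auto simp: eventually_at_filter)
  then show ?thesis
    by (simp add: has_vector_derivative_def has_derivative_iff_norm bounded_linear_scaleR_left
        tendsto_norm_zero_iff LIM_zero_iff)
qed

lemma norm_diff_le_vector_derivative_bound:
  fixes F :: "real \<Rightarrow> 'a::real_normed_vector"
  assumes "\<And>s. s \<in> ball t r \<Longrightarrow> (F has_vector_derivative F' s) (at s)"
    and "\<And>s. s \<in> ball t r \<Longrightarrow> norm (F' s) \<le> B" and "s \<in> ball t r"
  shows "norm (F s - F t) \<le> B * \<bar>s - t\<bar>"
proof -
  have "norm (F s - F t) \<le> B * norm (s - t)"
  proof (rule differentiable_bound[where S="ball t r" and f'="\<lambda>s h. h *\<^sub>R F' s"])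
    fix x assume x: "x \<in> ball t r"
    show "(F has_derivative (\<lambda>h. h *\<^sub>R F' x)) (at x within ball t r)"
      using has_vector_derivative_at_within[OF assms(1)[OF x]] by (simp add: has_vector_derivative_def)
    show "onorm (\<lambda>h. h *\<^sub>R F' x) \<le> B"
      using onorm_scaleR_left[of "\<lambda>h::real. h" "F' x"] assms(2)[OF x] by (simp add: onorm_id)
  qed (use assms(3) in \<open>auto intro: le_less_trans[OF zero_le_dist]\<close>)
  then show ?thesis by simp
qed

lemma tendsto_integral_difference_quotient:
  fixes H H' :: "real \<Rightarrow> 'a \<Rightarrow> 'b::{banach, second_countable_topology}"
  assumes meas: "\<And>t. H t \<in> borel_measurable M" "H' t0 \<in> borel_measurable M"
    and int: "integrable M D"
    and der: "\<And>t y. y \<in> space M \<Longrightarrow> ((\<lambda>s. H s y) has_vector_derivative H' t y) (at t)"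
    and bound: "\<And>t y. y \<in> space M \<Longrightarrow> dist t t0 < 1 \<Longrightarrow> norm (H' t y) \<le> D y"
    and X: "filterlim X (at t0) sequentially" "\<And>n. X n \<noteq> t0" "\<And>n. dist (X n) t0 < 1"
  shows "(\<lambda>n. \<integral>y. inverse (X n - t0) *\<^sub>R (H (X n) y - H t0 y) \<partial>M) \<longlonglongrightarrow> (\<integral>y. H' t0 y \<partial>M)"
proof (rule integral_dominated_convergence[where w=D])
  show "AE y in M. (\<lambda>n. inverse (X n - t0) *\<^sub>R (H (X n) y - H t0 y)) \<longlonglongrightarrow> H' t0 y"
    using filterlim_compose[OF der[unfolded has_vector_derivative_iff_difference_quotient] X(1)]
    by (intro AE_I2)
  have "norm (inverse (X n - t0) *\<^sub>R (H (X n) y - H t0 y)) \<le> D y" if "y \<in> space M" for n y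
  proof -
    have "norm (H (X n) y - H t0 y) \<le> D y * \<bar>X n - t0\<bar>"
      using that der bound X(3) by (intro norm_diff_le_vector_derivative_bound[where r=1]) (auto simp: dist_commute)
    moreover have "\<bar>X n - t0\<bar> > 0" using X(2)[of n] by simp
    ultimately show ?thesis by (simp add: pos_divide_le_eq flip: divide_inverse_commute)
  qed
  then show "AE y in M. norm (inverse (X n - t0) *\<^sub>R (H (X n) y - H t0 y)) \<le> D y" for n
    by (intro AE_I2)
qed (use meas int in auto)

lemma has_vector_derivative_integral_dominated:
  fixes H H' :: "real \<Rightarrow> 'a \<Rightarrow> 'b::{banach, second_countable_topology}"
  assumes meas: "\<And>t. H t \<in> borel_measurable M" "H' t0 \<in> borel_measurable M"
    and int: "\<And>t. integrable M (H t)" "integrable M D"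
    and der: "\<And>t y. y \<in> space M \<Longrightarrow> ((\<lambda>s. H s y) has_vector_derivative H' t y) (at t)"
    and bound: "\<And>t y. y \<in> space M \<Longrightarrow> dist t t0 < 1 \<Longrightarrow> norm (H' t y) \<le> D y"
  shows "((\<lambda>t. \<integral>y. H t y \<partial>M) has_vector_derivative (\<integral>y. H' t0 y \<partial>M)) (at t0)"
  unfolding has_vector_derivative_iff_difference_quotient tendsto_at_iff_sequentially comp_def
proof (intro allI impI)
  fix X :: "nat \<Rightarrow> real" assume X: "\<forall>i. X i \<in> UNIV - {t0}" "X \<longlonglongrightarrow> t0"
  obtain n0 where n0: "\<And>n. n \<ge> n0 \<Longrightarrow> dist (X n) t0 < 1"
    using tendstoD[OF X(2), of 1] by (auto simp: eventually_sequentially)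
  have "filterlim (\<lambda>n. X (n + n0)) (at t0) sequentially"
    unfolding filterlim_at using X by (auto intro!: always_eventually LIMSEQ_ignore_initial_segment)
  then have "(\<lambda>n. \<integral>y. inverse (X (n + n0) - t0) *\<^sub>R (H (X (n + n0)) y - H t0 y) \<partial>M) \<longlonglongrightarrow> (\<integral>y. H' t0 y \<partial>M)"
    using X(1) n0 by (intro tendsto_integral_difference_quotient[OF meas int(2) der bound]) auto
  then show "(\<lambda>n. inverse (X n - t0) *\<^sub>R ((\<integral>y. H (X n) y \<partial>M) - (\<integral>y. H t0 y \<partial>M))) \<longlonglongrightarrow> (\<integral>y. H' t0 y \<partial>M)"
    by (simp add: LIMSEQ_offset[where k=n0] Bochner_Integration.integral_diff[OF int(1) int(1)])
qed

lemma product_sigma_finite_lborel: "product_sigma_finite (\<lambda>_. lborel :: 'a::euclidean_space measure)"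
  by standard

lemma borel_measurable_PiM_continuous_on:
  fixes g :: "('i::countable \<Rightarrow> real) \<Rightarrow> 'b::topological_space"
  assumes "continuous_on UNIV g"
  shows "g \<in> borel_measurable (PiM I (\<lambda>_. lborel))"
proof -
  have "(\<lambda>y. y) \<in> borel_measurable (PiM I (\<lambda>_. lborel :: real measure))"
  proof (rule measurable_coordinatewise_then_product)
    fix i
    show "(\<lambda>y. y i) \<in> borel_measurable (PiM I (\<lambda>_. lborel :: real measure))"
    proof (cases "i \<in> I")
      case False
      have "(\<lambda>y. undefined :: real) \<in> borel_measurable (PiM I (\<lambda>_. lborel :: real measure))" by simp
      then show ?thesis
        by (rule measurable_cong[THEN iffD1, rotated])
          (use False in \<open>auto simp: space_PiM PiE_def extensional_def\<close>)
    qed (simp add: measurable_component_singleton)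
  qed
  from measurable_comp[OF this borel_measurable_continuous_onI[OF assms]] show ?thesis
    by (simp add: comp_def)
qed

lemma continuous_on_fun_upd:
  fixes F :: "('i \<Rightarrow> real) \<Rightarrow> 'b::topological_space"
  assumes "continuous_on UNIV F"
  shows "continuous_on UNIV (\<lambda>t. F (y(k := t)))"
proof -
  have "continuous_on UNIV (\<lambda>t::real. y(k := t))"
  proof (rule continuous_on_coordinatewise_then_product)
    show "continuous_on UNIV (\<lambda>t. (y(k := t)) i)" for i
      by (cases "i = k") auto
  qed
  then show ?thesis using continuous_on_compose2[OF assms] by fastforce
qed

lemma has_real_derivative_fun_upd:
  "((\<lambda>s. (x(k := s)) i) has_real_derivative (if i = k then 1 else 0)) (at t)"
  by (cases "i = k") auto

lemma integral_PiM_partial_derivative_eq_0: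
  fixes \<phi> \<psi> :: "('i \<Rightarrow> real) \<Rightarrow> 'a::euclidean_space"
  assumes I: "finite I" "k \<in> I"
    and int: "integrable (PiM I (\<lambda>_. lborel)) \<psi>"
    and der: "\<And>y t. ((\<lambda>s. \<phi> (y(k := s))) has_vector_derivative \<psi> (y(k := t))) (at t)"
    and cont: "\<And>y. continuous_on UNIV (\<lambda>t. \<psi> (y(k := t)))"
    and int_line: "\<And>y. integrable lborel (\<lambda>t. \<psi> (y(k := t)))"
    and top: "\<And>y. ((\<lambda>t. \<phi> (y(k := t))) \<longlongrightarrow> 0) at_top"
    and bot: "\<And>y. ((\<lambda>t. \<phi> (y(k := t))) \<longlongrightarrow> 0) at_bot"
  shows "integral\<^sup>L (PiM I (\<lambda>_. lborel)) \<psi> = 0"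
proof -
  have "integral\<^sup>L (PiM I (\<lambda>_. lborel)) \<psi> =
      (\<integral>y. (\<integral>t. \<psi> (y(k := t)) \<partial>lborel) \<partial>PiM (I - {k}) (\<lambda>_. lborel))"
    using product_sigma_finite.product_integral_insert[OF product_sigma_finite_lborel, of "I - {k}" k \<psi>]
      int I by (simp add: insert_absorb)
  also have "\<dots> = 0"
    using integral_lborel_derivative_eq_0[OF der cont int_line top bot] by simp
  finally show ?thesis .
qed

lemma has_vector_derivative_exp:
  fixes Z :: "real \<Rightarrow> complex"
  assumes "(Z has_vector_derivative Z') (at t)"
  shows "((\<lambda>s. exp (Z s)) has_vector_derivative Z' * exp (Z t)) (at t)"
  using field_vector_diff_chain_at[OF assms DERIV_exp] by (simp add: comp_def)

lemma pd_eqI: "((\<lambda>t. g (y(k := t))) has_vector_derivative D) (at (y k)) \<Longrightarrow> pd k g y = D"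
  unfolding pd_def by (rule vector_derivative_at)

lemma continuous_on_tendsto_at_bot_bdd_above:
  fixes \<phi> :: "real \<Rightarrow> real"
  assumes "continuous_on {0..} \<phi>" "filterlim \<phi> at_bot at_top"
  obtains B where "\<And>z. z \<ge> 0 \<Longrightarrow> \<phi> z \<le> B"
proof -
  obtain S where S: "\<And>z. z \<ge> S \<Longrightarrow> \<phi> z \<le> 0"
    using assms(2) by (auto simp: filterlim_at_bot eventually_at_top_linorder)
  have "compact (\<phi> ` {0..max 0 S})"
    by (rule compact_continuous_image) (auto intro: continuous_on_subset[OF assms(1)])
  then obtain B where B: "\<And>z. z \<in> {0..max 0 S} \<Longrightarrow> \<phi> z \<le> B"
    using compact_imp_bounded bounded_real by (metis abs_le_D1 imageI)
  have "\<phi> z \<le> max B 0" if "z \<ge> 0" for z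
    using B[of z] S[of z] that by (cases "z \<le> max 0 S") force+
  then show ?thesis by (rule that)
qed

definition cosh_weight :: "real \<Rightarrow> real \<Rightarrow> real \<Rightarrow> real" where
  "cosh_weight b c t = exp (b * \<bar>t\<bar> - c * (exp t + exp (- t)))"

lemma cosh_weight_pos: "cosh_weight b c t > 0"
  by (simp add: cosh_weight_def)

lemma borel_measurable_cosh_weight [measurable]: "cosh_weight b c \<in> borel_measurable borel"
  unfolding cosh_weight_def by measurable

lemma cosh_weight_le_gaussian:
  assumes "c > 0"
  obtains K where "\<And>t. cosh_weight b c t \<le> K * exp (- (t\<^sup>2 / 2))"
proof -
  have "filterlim (\<lambda>z. b * z + z\<^sup>2 / 2 - c * exp z) at_bot at_top"
    using assms by real_asymp
  then obtain B where B: "\<And>z. z \<ge> 0 \<Longrightarrow> b * z + z\<^sup>2 / 2 - c * exp z \<le> B"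
    by (rule continuous_on_tendsto_at_bot_bdd_above[rotated]) (auto intro!: continuous_intros)
  have "cosh_weight b c t \<le> exp B * exp (- (t\<^sup>2 / 2))" for t
  proof -
    have "exp \<bar>t\<bar> \<le> exp t + exp (- t)" by (cases "t \<ge> 0") auto
    then have "b * \<bar>t\<bar> - c * (exp t + exp (- t)) \<le> b * \<bar>t\<bar> - c * exp \<bar>t\<bar>"
      using assms by simp
    also have "\<dots> \<le> B - t\<^sup>2 / 2" using B[of "\<bar>t\<bar>"] by simp
    finally show ?thesis by (simp add: cosh_weight_def flip: exp_add)
  qed
  then show ?thesis by (rule that)
qed

lemma integrable_cosh_weight:
  assumes "c > 0"
  shows "integrable lborel (cosh_weight b c)"
proof -
  obtain K where K: "\<And>t. cosh_weight b c t \<le> K * exp (- (t\<^sup>2 / 2))"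
    using cosh_weight_le_gaussian[OF assms] by blast
  have "integrable lborel (\<lambda>t. K * (sqrt (2 * pi) * normal_density 0 1 t))"
    by (intro integrable_mult_right integrable_normal_density) auto
  then have "integrable lborel (\<lambda>t. K * exp (- (t\<^sup>2 / 2)))"
    by (simp add: normal_density_def)
  then show ?thesis
    by (rule Bochner_Integration.integrable_bound)
      (auto intro!: AE_I2 order_trans[OF K] simp: less_imp_le[OF cosh_weight_pos])
qed

lemma cosh_weight_tendsto_0:
  assumes "c > 0"
  shows "(cosh_weight b c \<longlongrightarrow> 0) at_top" "(cosh_weight b c \<longlongrightarrow> 0) at_bot"
proof -
  obtain K where K: "\<And>t. cosh_weight b c t \<le> K * exp (- (t\<^sup>2 / 2))"
    using cosh_weight_le_gaussian[OF assms] by blast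
  have lim: "((\<lambda>t. K * exp (- (t\<^sup>2 / 2))) \<longlongrightarrow> 0) at_top" "((\<lambda>t. K * exp (- (t\<^sup>2 / 2))) \<longlongrightarrow> 0) at_bot"
    by real_asymp+
  have bound: "\<forall>\<^sub>F t in F. 0 \<le> cosh_weight b c t" "\<forall>\<^sub>F t in F. cosh_weight b c t \<le> K * exp (- (t\<^sup>2 / 2))"
    for F
    using K less_imp_le[OF cosh_weight_pos] by (auto intro!: always_eventually)
  show "(cosh_weight b c \<longlongrightarrow> 0) at_top" "(cosh_weight b c \<longlongrightarrow> 0) at_bot"
    by (rule tendsto_sandwich[OF bound tendsto_const lim(1)], rule tendsto_sandwich[OF bound tendsto_const lim(2)])
qed

section \<open>Continuants\<close>

text \<open>With \<open>w = u - v\<close>, \<open>a = \<alpha>\<close> and \<open>b = \<beta>\<close>, these are the multipliers produced under the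
  integral by \<open>A_n(u)\<close> acting on the kernel in the \<open>x\<close>-variables, resp. on \<open>f\<close> in the
  \<open>y\<close>-variables.\<close>

fun continuant_x :: "'a::comm_ring_1 \<Rightarrow> (nat \<Rightarrow> 'a) \<Rightarrow> (nat \<Rightarrow> 'a) \<Rightarrow> nat \<Rightarrow> 'a" where
  "continuant_x w a b 0 = 1"
| "continuant_x w a b (Suc 0) = w - a 1 + b 0"
| "continuant_x w a b (Suc (Suc n)) =
     (w - a (Suc (Suc n)) + b (Suc n)) * continuant_x w a b (Suc n) + a (Suc n) * b (Suc n) * continuant_x w a b n"

fun continuant_y :: "'a::comm_ring_1 \<Rightarrow> (nat \<Rightarrow> 'a) \<Rightarrow> (nat \<Rightarrow> 'a) \<Rightarrow> nat \<Rightarrow> 'a" where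
  "continuant_y w a b 0 = 1"
| "continuant_y w a b (Suc 0) = w - a 1 + b 1"
| "continuant_y w a b (Suc (Suc n)) =
     (w - a (Suc (Suc n)) + b (Suc (Suc n))) * continuant_y w a b (Suc n) + b (Suc n) * a (Suc (Suc n)) * continuant_y w a b n"

lemma continuant_y_Suc:
  "b 0 = 0 \<Longrightarrow> continuant_y w a b (Suc n) =
    (w - a (Suc n) + b (Suc n)) * continuant_y w a b n + b n * a (Suc n) * continuant_y w a b (n - 1)"
  by (cases n) simp_all

lemma continuant_x_eq_continuant_y:
  assumes "b 0 = 0"
  shows "continuant_x w a b n = continuant_y w a b n - b n * continuant_y w a b (n - 1)"
proof (induction n rule: induct_nat_012)
  case (ge2 n)
  let ?P = "continuant_x w a b" and ?T = "continuant_y w a b"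
  have "?P (Suc (Suc n)) =
      (w - a (Suc (Suc n)) + b (Suc n)) * (?T (Suc n) - b (Suc n) * ?T n) + a (Suc n) * b (Suc n) * (?T n - b n * ?T (n - 1))"
    using ge2 by simp
  also have "\<dots> = (w - a (Suc (Suc n))) * ?T (Suc n) + b (Suc n) * a (Suc (Suc n)) * ?T n"
    unfolding continuant_y_Suc[where b=b, OF assms, of w a n] by (simp add: algebra_simps)
  also have "\<dots> = ?T (Suc (Suc n)) - b (Suc (Suc n)) * ?T (Suc n)"
    by (simp add: algebra_simps)
  finally show ?case by simp
qed (use assms in simp_all)

lemma continuant_x_cong:
  "(\<And>j. j \<le> n \<Longrightarrow> a j = a' j) \<Longrightarrow> (\<And>j. j < n \<Longrightarrow> b j = b' j) \<Longrightarrow>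
    continuant_x w a b n = continuant_x w a' b' n"
  by (induction n rule: induct_nat_012) simp_all

section \<open>The kernel\<close>

locale toda_kernel =
  fixes N :: nat and h :: real and v :: complex
  assumes N_ge_2: "N \<ge> 2" and h_pos: "h > 0"
begin

abbreviation ymeasure :: "(nat \<Rightarrow> real) measure" where
  "ymeasure \<equiv> PiM {1..<N} (\<lambda>_. lborel)"

definition ynorm :: "(nat \<Rightarrow> real) \<Rightarrow> real" where
  "ynorm y = (\<Sum>i\<in>{1..<N}. \<bar>y i\<bar>)"

definition exp_bounded :: "((nat \<Rightarrow> real) \<Rightarrow> complex) \<Rightarrow> bool" where
  "exp_bounded g \<longleftrightarrow> (\<exists>C a. \<forall>y. norm (g y) \<le> C * exp (a * ynorm y))"

definition admissible :: "((nat \<Rightarrow> real) \<Rightarrow> complex) \<Rightarrow> bool" where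
  "admissible g \<longleftrightarrow> continuous_on UNIV g \<and> exp_bounded g"

lemma ynorm_nonneg: "ynorm y \<ge> 0"
  unfolding ynorm_def by (auto intro: sum_nonneg)

lemma abs_le_ynorm: "i \<in> {1..<N} \<Longrightarrow> \<bar>y i\<bar> \<le> ynorm y"
  unfolding ynorm_def by (rule member_le_sum[where f="\<lambda>i. \<bar>y i\<bar>"]) auto

lemma exp_bounded_coeff_nonneg: "norm (g y) \<le> C * exp (a * ynorm y) \<Longrightarrow> C \<ge> 0"
  by (metis exp_gt_zero norm_ge_zero order_trans zero_le_mult_iff not_le less_imp_le)

lemma exp_bounded_add:
  assumes "exp_bounded g1" "exp_bounded g2"
  shows "exp_bounded (\<lambda>y. g1 y + g2 y)"
proof -
  obtain C1 a1 C2 a2 where 1: "\<And>y. norm (g1 y) \<le> C1 * exp (a1 * ynorm y)"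
    and 2: "\<And>y. norm (g2 y) \<le> C2 * exp (a2 * ynorm y)"
    using assms unfolding exp_bounded_def by blast
  have C: "C1 \<ge> 0" "C2 \<ge> 0" using exp_bounded_coeff_nonneg 1 2 by blast+
  have "norm (g1 y + g2 y) \<le> (C1 + C2) * exp (max a1 a2 * ynorm y)" for y
  proof -
    have "norm (g1 y + g2 y) \<le> C1 * exp (a1 * ynorm y) + C2 * exp (a2 * ynorm y)"
      using norm_triangle_ineq[of "g1 y" "g2 y"] 1[of y] 2[of y] by simp
    also have "\<dots> \<le> C1 * exp (max a1 a2 * ynorm y) + C2 * exp (max a1 a2 * ynorm y)"
      using C ynorm_nonneg[of y] by (intro add_mono mult_left_mono) (auto intro: mult_right_mono)
    finally show ?thesis by (simp add: algebra_simps)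
  qed
  then show ?thesis unfolding exp_bounded_def by blast
qed

lemma exp_bounded_mult:
  assumes "exp_bounded g1" "exp_bounded g2"
  shows "exp_bounded (\<lambda>y. g1 y * g2 y)"
proof -
  obtain C1 a1 C2 a2 where 1: "\<And>y. norm (g1 y) \<le> C1 * exp (a1 * ynorm y)"
    and 2: "\<And>y. norm (g2 y) \<le> C2 * exp (a2 * ynorm y)"
    using assms unfolding exp_bounded_def by blast
  have C: "C1 \<ge> 0" "C2 \<ge> 0" using exp_bounded_coeff_nonneg 1 2 by blast+
  have "norm (g1 y * g2 y) \<le> (C1 * C2) * exp ((a1 + a2) * ynorm y)" for y
  proof -
    have "norm (g1 y * g2 y) \<le> (C1 * exp (a1 * ynorm y)) * (C2 * exp (a2 * ynorm y))"
      unfolding norm_mult using C by (intro mult_mono 1 2) auto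
    then show ?thesis by (simp add: algebra_simps exp_add)
  qed
  then show ?thesis unfolding exp_bounded_def by blast
qed

lemma admissible_const [simp]: "admissible (\<lambda>y. c)"
proof -
  have "\<forall>y. norm c \<le> norm c * exp (0 * ynorm y)" by simp
  then show ?thesis unfolding admissible_def exp_bounded_def by (blast intro: continuous_on_const)
qed

lemma admissible_add [simp]: "admissible g1 \<Longrightarrow> admissible g2 \<Longrightarrow> admissible (\<lambda>y. g1 y + g2 y)"
  unfolding admissible_def by (auto intro: exp_bounded_add continuous_intros)

lemma admissible_mult [simp]: "admissible g1 \<Longrightarrow> admissible g2 \<Longrightarrow> admissible (\<lambda>y. g1 y * g2 y)"
  unfolding admissible_def by (auto intro: exp_bounded_mult continuous_intros)

lemma admissible_uminus [simp]: "admissible g \<Longrightarrow> admissible (\<lambda>y. - g y)"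
  using admissible_mult[OF admissible_const[of "- 1"], of g] by simp

lemma admissible_diff [simp]: "admissible g1 \<Longrightarrow> admissible g2 \<Longrightarrow> admissible (\<lambda>y. g1 y - g2 y)"
  using admissible_add[OF _ admissible_uminus, of g1 g2] by simp

lemma admissible_divide [simp]: "admissible g \<Longrightarrow> admissible (\<lambda>y. g y / c)"
  using admissible_mult[OF _ admissible_const[of "inverse c"], of g] by (simp add: divide_inverse)

lemma admissible_exp:
  assumes "continuous_on UNIV r" "\<And>y. \<bar>r y\<bar> \<le> B + a * ynorm y"
  shows "admissible (\<lambda>y. of_real (exp (r y)))"
proof -
  have "norm (of_real (exp (r y)) :: complex) \<le> exp B * exp (a * ynorm y)" for y
    using assms(2)[of y] by (simp flip: exp_add)
  then show ?thesis
    unfolding admissible_def exp_bounded_def using assms(1) by (auto intro!: continuous_intros)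
qed

lemma admissible_exp_coordinate:
  assumes "i \<in> {1..<N}"
  shows "admissible (\<lambda>y. of_real (exp (c - y i)))" "admissible (\<lambda>y. of_real (exp (y i - c)))"
proof -
  have bound: "\<bar>c - y i\<bar> \<le> \<bar>c\<bar> + 1 * ynorm y" "\<bar>y i - c\<bar> \<le> \<bar>c\<bar> + 1 * ynorm y" for y
    using abs_le_ynorm[OF assms, of y] by linarith+
  show "admissible (\<lambda>y. of_real (exp (c - y i)))" "admissible (\<lambda>y. of_real (exp (y i - c)))"
    by (rule admissible_exp[OF _ bound(1)] admissible_exp[OF _ bound(2)]; simp add: continuous_intros)+
qed

lemma admissible_exp_coordinates:
  assumes "i \<in> {1..<N}" "j \<in> {1..<N}"
  shows "admissible (\<lambda>y. of_real (exp (y i - y j)))"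
proof -
  have "\<bar>y i - y j\<bar> \<le> 0 + 2 * ynorm y" for y
    using abs_le_ynorm[OF assms(1), of y] abs_le_ynorm[OF assms(2), of y] by linarith
  then show ?thesis by (rule admissible_exp[rotated]) (simp add: continuous_intros)
qed

lemma norm_Qker:
  "norm (Qker h N v x y) = exp (- (Im v / h) * ((\<Sum>i=1..N. x i) - (\<Sum>i=1..<N. y i))
      - (1 / h) * (\<Sum>i=1..<N. exp (x i - y i) + exp (y i - x (Suc i))))"
  unfolding Qker_def norm_exp_eq_Re by (simp add: Re_divide_of_real)

lemma continuous_on_Qker: "continuous_on UNIV (Qker h N v x)"
  unfolding Qker_def by (intro continuous_intros) auto

lemma norm_Qker_le:
  fixes K :: real
  assumes K: "\<And>j. j \<in> {1..N} \<Longrightarrow> \<bar>x j\<bar> \<le> K"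
  shows "norm (Qker h N v x y) \<le>
    exp (\<bar>Im v\<bar> / h * (N * K)) * (\<Prod>i\<in>{1..<N}. cosh_weight (\<bar>Im v\<bar> / h) (exp (- K) / h) (y i))"
proof -
  let ?b = "\<bar>Im v\<bar> / h" and ?c = "exp (- K) / h" and ?S = "(\<Sum>i=1..N. x i) - (\<Sum>i=1..<N. y i)"
  have "\<bar>\<Sum>i=1..N. x i\<bar> \<le> (\<Sum>i=1..N. \<bar>x i\<bar>)" by (rule sum_abs)
  also have "\<dots> \<le> (\<Sum>i=1..N. K)" by (rule sum_mono) (use K in auto)
  finally have sum_x: "\<bar>\<Sum>i=1..N. x i\<bar> \<le> N * K" by simp
  have "- (Im v / h) * ?S \<le> ?b * \<bar>?S\<bar>"
    using abs_ge_minus_self[of "Im v / h * ?S"] h_pos by (simp add: abs_mult)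
  also have "\<dots> \<le> ?b * (N * K + (\<Sum>i=1..<N. \<bar>y i\<bar>))"
    using h_pos by (intro mult_left_mono order_trans[OF abs_triangle_ineq4] add_mono sum_x sum_abs) simp_all
  finally have lin: "- (Im v / h) * ?S \<le> ?b * (N * K) + ?b * (\<Sum>i=1..<N. \<bar>y i\<bar>)"
    by (simp add: distrib_left)
  moreover have "(\<Sum>i=1..<N. ?c * (exp (y i) + exp (- y i))) \<le>
      (1 / h) * (\<Sum>i=1..<N. exp (x i - y i) + exp (y i - x (Suc i)))"
  proof -
    have "exp (- K) * exp (- y i) \<le> exp (x i - y i)" "exp (- K) * exp (y i) \<le> exp (y i - x (Suc i))"
      if "i \<in> {1..<N}" for i
      using K[of i] K[of "Suc i"] that by (auto simp flip: exp_add)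
    then have "(1 / h) * (\<Sum>i=1..<N. exp (- K) * exp (- y i) + exp (- K) * exp (y i)) \<le>
        (1 / h) * (\<Sum>i=1..<N. exp (x i - y i) + exp (y i - x (Suc i)))"
      using h_pos by (intro mult_left_mono sum_mono add_mono) auto
    then show ?thesis by (simp add: sum_distrib_left algebra_simps)
  qed
  moreover have "(\<Prod>i\<in>{1..<N}. cosh_weight ?b ?c (y i)) =
      exp (?b * (\<Sum>i=1..<N. \<bar>y i\<bar>) - (\<Sum>i=1..<N. ?c * (exp (y i) + exp (- y i))))"
    by (simp add: cosh_weight_def exp_sum sum_subtractf sum_distrib_left flip: exp_sum)
  ultimately show ?thesis
    unfolding norm_Qker by (simp flip: exp_add)
qed

lemma prod_cosh_weight_mult_exp_ynorm:
  "exp (a * ynorm y) * (\<Prod>i\<in>{1..<N}. cosh_weight b c (y i)) = (\<Prod>i\<in>{1..<N}. cosh_weight (a + b) c (y i))"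
proof -
  have "exp (a * ynorm y) = (\<Prod>i\<in>{1..<N}. exp (a * \<bar>y i\<bar>))"
    unfolding ynorm_def by (simp add: sum_distrib_left exp_sum)
  then show ?thesis
    by (simp add: prod.distrib[symmetric] cosh_weight_def exp_add[symmetric] algebra_simps)
qed

lemma norm_Qker_mult_le:
  fixes K :: real
  assumes K: "\<And>j. j \<in> {1..N} \<Longrightarrow> \<bar>x j\<bar> \<le> K" and g: "norm (g y) \<le> C * exp (a * ynorm y)"
  shows "norm (Qker h N v x y * g y) \<le>
    C * exp (\<bar>Im v\<bar> / h * (N * K)) * (\<Prod>i\<in>{1..<N}. cosh_weight (a + \<bar>Im v\<bar> / h) (exp (- K) / h) (y i))"
proof -
  have "norm (Qker h N v x y * g y) \<le>
      (exp (\<bar>Im v\<bar> / h * (N * K)) * (\<Prod>i\<in>{1..<N}. cosh_weight (\<bar>Im v\<bar> / h) (exp (- K) / h) (y i))) *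
      (C * exp (a * ynorm y))"
    unfolding norm_mult
    by (intro mult_mono norm_Qker_le K g mult_nonneg_nonneg prod_nonneg)
      (auto intro: less_imp_le cosh_weight_pos)
  also have "\<dots> = C * exp (\<bar>Im v\<bar> / h * (N * K)) *
      (exp (a * ynorm y) * (\<Prod>i\<in>{1..<N}. cosh_weight (\<bar>Im v\<bar> / h) (exp (- K) / h) (y i)))"
    by (simp only: ac_simps)
  finally show ?thesis
    unfolding prod_cosh_weight_mult_exp_ynorm .
qed

lemma integrable_prod_cosh_weight:
  "c > 0 \<Longrightarrow> integrable ymeasure (\<lambda>y. \<Prod>i\<in>{1..<N}. cosh_weight b c (y i))"
  using product_sigma_finite.product_integrable_prod[OF product_sigma_finite_lborel,
      of "{1..<N}" "\<lambda>_. cosh_weight b c"] integrable_cosh_weight by simp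

lemma abs_le_sum_abs:
  fixes x :: "nat \<Rightarrow> real"
  shows "j \<in> {1..N} \<Longrightarrow> \<bar>x j\<bar> \<le> (\<Sum>i=1..N. \<bar>x i\<bar>)"
  by (rule member_le_sum[where f="\<lambda>i. \<bar>x i\<bar>"]) auto

lemma integrable_Qker_mult:
  assumes "admissible g"
  shows "integrable ymeasure (\<lambda>y. Qker h N v x y * g y)"
proof -
  obtain C a where g: "\<And>y. norm (g y) \<le> C * exp (a * ynorm y)"
    using assms unfolding admissible_def exp_bounded_def by blast
  define K where "K = (\<Sum>i=1..N. \<bar>x i\<bar>)"
  define bound where "bound y = C * exp (\<bar>Im v\<bar> / h * (N * K)) *
      (\<Prod>i\<in>{1..<N}. cosh_weight (a + \<bar>Im v\<bar> / h) (exp (- K) / h) (y i))" for y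
  have int: "integrable ymeasure bound"
    unfolding bound_def using h_pos by (intro integrable_mult_right integrable_prod_cosh_weight) simp
  have meas: "(\<lambda>y. Qker h N v x y * g y) \<in> borel_measurable ymeasure"
    using assms unfolding admissible_def
    by (intro borel_measurable_times borel_measurable_PiM_continuous_on continuous_on_Qker) auto
  have "norm (Qker h N v x y * g y) \<le> norm (bound y)" for y
  proof -
    have "norm (Qker h N v x y * g y) \<le> bound y"
      unfolding bound_def K_def by (rule norm_Qker_mult_le[OF abs_le_sum_abs g])
    then show ?thesis by simp
  qed
  then show ?thesis
    by (intro Bochner_Integration.integrable_bound[OF int meas] AE_I2)
qed

lemma Qop_add:
  "admissible g1 \<Longrightarrow> admissible g2 \<Longrightarrow> Qop h N v (\<lambda>y. g1 y + g2 y) x = Qop h N v g1 x + Qop h N v g2 x"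
  unfolding Qop_def distrib_left by (intro Bochner_Integration.integral_add integrable_Qker_mult)

lemma Qop_diff:
  "admissible g1 \<Longrightarrow> admissible g2 \<Longrightarrow> Qop h N v (\<lambda>y. g1 y - g2 y) x = Qop h N v g1 x - Qop h N v g2 x"
  unfolding Qop_def right_diff_distrib by (intro Bochner_Integration.integral_diff integrable_Qker_mult)

lemma Qop_cmult: "Qop h N v (\<lambda>y. c * g y) x = c * Qop h N v g x"
  unfolding Qop_def by (simp add: mult.left_commute)

section \<open>Derivatives of the kernel\<close>

definition alpha :: "(nat \<Rightarrow> real) \<Rightarrow> (nat \<Rightarrow> real) \<Rightarrow> nat \<Rightarrow> complex" where
  "alpha x y k = (if 0 < k \<and> k < N then \<i> * of_real (exp (x k - y k)) else 0)"

definition beta :: "(nat \<Rightarrow> real) \<Rightarrow> (nat \<Rightarrow> real) \<Rightarrow> nat \<Rightarrow> complex" where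
  "beta x y k = (if 0 < k \<and> k < N then \<i> * of_real (exp (y k - x (Suc k))) else 0)"

definition dlogQ_x :: "nat \<Rightarrow> (nat \<Rightarrow> real) \<Rightarrow> (nat \<Rightarrow> real) \<Rightarrow> complex" where
  "dlogQ_x k x y = (beta x y (k - 1) - alpha x y k - v) / (\<i> * of_real h)"

definition dlogQ_y :: "nat \<Rightarrow> (nat \<Rightarrow> real) \<Rightarrow> (nat \<Rightarrow> real) \<Rightarrow> complex" where
  "dlogQ_y k x y = (v + alpha x y k - beta x y k) / (\<i> * of_real h)"

lemma alpha_mult_beta:
  assumes "0 < k" "k < N"
  shows "alpha x y k * beta x y k = - of_real (exp (x k - x (Suc k)))"
proof -
  have "exp (x k - y k) * exp (y k - x (Suc k)) = exp (x k - x (Suc k))"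
    by (simp flip: exp_add)
  then show ?thesis
    using assms unfolding alpha_def beta_def by (simp add: algebra_simps flip: of_real_mult)
qed

lemma beta_mult_alpha_Suc:
  assumes "0 < k" "Suc k < N"
  shows "beta x y k * alpha x y (Suc k) = - of_real (exp (y k - y (Suc k)))"
proof -
  have "exp (y k - x (Suc k)) * exp (x (Suc k) - y (Suc k)) = exp (y k - y (Suc k))"
    by (simp flip: exp_add)
  then show ?thesis
    using assms unfolding alpha_def beta_def by (simp add: algebra_simps flip: of_real_mult)
qed

lemma dlogQ_x_eq: "u + \<i> * of_real h * dlogQ_x k x y = (u - v) - alpha x y k + beta x y (k - 1)"
  using h_pos by (simp add: dlogQ_x_def)

lemma dlogQ_y_eq: "u - \<i> * of_real h * dlogQ_y k x y = (u - v) - alpha x y k + beta x y k"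
  using h_pos by (simp add: dlogQ_y_def)

lemma has_vector_derivative_Qker_x:
  assumes k: "k \<in> {1..N}"
  shows "((\<lambda>s. Qker h N v (x(k := s)) y) has_vector_derivative
    dlogQ_x k (x(k := t)) y * Qker h N v (x(k := t)) y) (at t)"
proof -
  define S1 where "S1 s = (\<Sum>i=1..N. (x(k := s)) i) - (\<Sum>i=1..<N. y i)" for s
  define S2 where "S2 s = (1 / h) * (\<Sum>i=1..<N. exp ((x(k := s)) i - y i) + exp (y i - (x(k := s)) (Suc i)))" for s
  define A where "A = (if k < N then exp (t - y k) else 0)"
  define B where "B = (if 2 \<le> k then exp (y (k - 1) - t) else 0)"
  have "(S1 has_real_derivative (\<Sum>i=1..N. if i = k then 1 else 0) - 0) (at t)"
    unfolding S1_def by (intro derivative_intros has_real_derivative_fun_upd)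
  then have dS1: "(S1 has_real_derivative 1) (at t)"
    using k by simp
  have "(S2 has_real_derivative (1 / h) * (\<Sum>i=1..<N. exp ((x(k := t)) i - y i) * ((if i = k then 1 else 0) - 0)
      + exp (y i - (x(k := t)) (Suc i)) * (0 - (if Suc i = k then 1 else 0)))) (at t)"
    unfolding S2_def
    by (intro DERIV_cmult DERIV_sum DERIV_add DERIV_fun_exp DERIV_diff has_real_derivative_fun_upd DERIV_const)
  moreover have "(\<Sum>i=1..<N. exp ((x(k := t)) i - y i) * ((if i = k then 1 else 0) - 0)
      + exp (y i - (x(k := t)) (Suc i)) * (0 - (if Suc i = k then 1 else 0))) =
      (\<Sum>i=1..<N. if i = k then exp (t - y i) else 0) - (\<Sum>i=1..<N. if i = k - 1 then exp (y i - t) else 0)"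
    unfolding sum_subtractf[symmetric] using k by (intro sum.cong) auto
  moreover have "(\<Sum>i=1..<N. if i = k then exp (t - y i) else 0) = A"
    using k by (simp add: A_def)
  moreover have "(\<Sum>i=1..<N. if i = k - 1 then exp (y i - t) else 0) = B"
    using k by (auto simp: B_def)
  ultimately have dS2: "(S2 has_real_derivative (1 / h) * (A - B)) (at t)"
    by simp
  have dZ: "((\<lambda>s. \<i> * v / of_real h * of_real (S1 s) - of_real (S2 s)) has_vector_derivative
      \<i> * v / of_real h * of_real 1 - of_real ((1 / h) * (A - B))) (at t)"
    by (intro has_vector_derivative_diff has_vector_derivative_mult_right has_vector_derivative_of_real dS1 dS2)
  have eq: "\<i> * v / of_real h * of_real 1 - of_real ((1 / h) * (A - B)) = dlogQ_x k (x(k := t)) y"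
    using k h_pos by (auto simp: A_def B_def dlogQ_x_def alpha_def beta_def field_simps)
  have Q: "Qker h N v (x(k := s)) y = exp (\<i> * v / of_real h * of_real (S1 s) - of_real (S2 s))" for s
    unfolding Qker_def S1_def S2_def ..
  show ?thesis
    unfolding Q eq[symmetric] by (rule has_vector_derivative_exp[OF dZ])
qed

lemma has_vector_derivative_Qker_y:
  assumes k: "k \<in> {1..<N}"
  shows "((\<lambda>s. Qker h N v x (y(k := s))) has_vector_derivative
    dlogQ_y k x (y(k := t)) * Qker h N v x (y(k := t))) (at t)"
proof -
  define S1 where "S1 s = (\<Sum>i=1..N. x i) - (\<Sum>i=1..<N. (y(k := s)) i)" for s
  define S2 where "S2 s = (1 / h) * (\<Sum>i=1..<N. exp (x i - (y(k := s)) i) + exp ((y(k := s)) i - x (Suc i)))" for s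
  have "(S1 has_real_derivative 0 - (\<Sum>i=1..<N. if i = k then 1 else 0)) (at t)"
    unfolding S1_def by (intro derivative_intros has_real_derivative_fun_upd)
  then have dS1: "(S1 has_real_derivative - 1) (at t)"
    using k by simp
  have "(S2 has_real_derivative (1 / h) * (\<Sum>i=1..<N. exp (x i - (y(k := t)) i) * (0 - (if i = k then 1 else 0))
      + exp ((y(k := t)) i - x (Suc i)) * ((if i = k then 1 else 0) - 0))) (at t)"
    unfolding S2_def
    by (intro DERIV_cmult DERIV_sum DERIV_add DERIV_fun_exp DERIV_diff has_real_derivative_fun_upd DERIV_const)
  moreover have "(\<Sum>i=1..<N. exp (x i - (y(k := t)) i) * (0 - (if i = k then 1 else 0))
      + exp ((y(k := t)) i - x (Suc i)) * ((if i = k then 1 else 0) - 0)) =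
      (\<Sum>i=1..<N. if i = k then exp (t - x (Suc i)) - exp (x i - t) else 0)"
    by (intro sum.cong) auto
  ultimately have dS2: "(S2 has_real_derivative (1 / h) * (exp (t - x (Suc k)) - exp (x k - t))) (at t)"
    using k by simp
  have dZ: "((\<lambda>s. \<i> * v / of_real h * of_real (S1 s) - of_real (S2 s)) has_vector_derivative
      \<i> * v / of_real h * of_real (- 1) - of_real ((1 / h) * (exp (t - x (Suc k)) - exp (x k - t)))) (at t)"
    by (intro has_vector_derivative_diff has_vector_derivative_mult_right has_vector_derivative_of_real dS1 dS2)
  have eq: "\<i> * v / of_real h * of_real (- 1) - of_real ((1 / h) * (exp (t - x (Suc k)) - exp (x k - t)))
      = dlogQ_y k x (y(k := t))"
    using k h_pos by (auto simp: dlogQ_y_def alpha_def beta_def field_simps)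
  have Q: "Qker h N v x (y(k := s)) = exp (\<i> * v / of_real h * of_real (S1 s) - of_real (S2 s))" for s
    unfolding Qker_def S1_def S2_def ..
  show ?thesis
    unfolding Q eq[symmetric] by (rule has_vector_derivative_exp[OF dZ])
qed

lemma admissible_alpha [simp]: "admissible (\<lambda>y. alpha x y k)"
  by (cases "0 < k \<and> k < N") (auto simp: alpha_def admissible_exp_coordinate)

lemma admissible_beta [simp]: "admissible (\<lambda>y. beta x y k)"
  by (cases "0 < k \<and> k < N") (auto simp: beta_def admissible_exp_coordinate)

lemma admissible_dlogQ_x [simp]: "admissible (\<lambda>y. dlogQ_x k x y)"
  unfolding dlogQ_x_def by (intro admissible_divide admissible_diff admissible_const admissible_alpha admissible_beta)

lemma admissible_dlogQ_y [simp]: "admissible (\<lambda>y. dlogQ_y k x y)"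
  unfolding dlogQ_y_def
  by (intro admissible_divide admissible_diff admissible_add admissible_const admissible_alpha admissible_beta)

lemma norm_alpha_le:
  assumes "\<And>j. j \<in> {1..N} \<Longrightarrow> \<bar>x j\<bar> \<le> K"
  shows "norm (alpha x y k) \<le> exp K * exp (ynorm y)"
proof (cases "0 < k \<and> k < N")
  case True
  then have "x k - y k \<le> K + ynorm y"
    using assms[of k] abs_le_ynorm[of k y] by auto
  then show ?thesis using True by (simp add: alpha_def norm_mult flip: exp_add)
qed (auto simp: alpha_def)

lemma norm_beta_le:
  assumes "\<And>j. j \<in> {1..N} \<Longrightarrow> \<bar>x j\<bar> \<le> K"
  shows "norm (beta x y k) \<le> exp K * exp (ynorm y)"
proof (cases "0 < k \<and> k < N")
  case True
  then have "y k - x (Suc k) \<le> K + ynorm y"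
    using assms[of "Suc k"] abs_le_ynorm[of k y] by auto
  then show ?thesis using True by (simp add: beta_def norm_mult flip: exp_add)
qed (auto simp: beta_def)

lemma norm_dlogQ_x_le:
  assumes "\<And>j. j \<in> {1..N} \<Longrightarrow> \<bar>x j\<bar> \<le> K"
  shows "norm (dlogQ_x k x y) \<le> (norm v + 2 * exp K) / h * exp (ynorm y)"
proof -
  have "norm v \<le> norm v * exp (ynorm y)"
    using ynorm_nonneg[of y] by (simp add: mult_le_cancel_left1)
  then have "norm (beta x y (k - 1) - alpha x y k - v) \<le> (norm v + 2 * exp K) * exp (ynorm y)"
    using norm_triangle_ineq4[of "beta x y (k - 1) - alpha x y k" v]
      norm_triangle_ineq4[of "beta x y (k - 1)" "alpha x y k"]
      norm_alpha_le[of x K y k] norm_beta_le[of x K y "k - 1"] assms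
    by (simp add: algebra_simps)
  moreover have "norm (\<i> * complex_of_real h) = h"
    using h_pos by (simp add: norm_mult)
  ultimately show ?thesis
    using h_pos by (simp add: dlogQ_x_def norm_divide divide_right_mono)
qed

lemma norm_dlogQ_x_mult_le:
  assumes "\<And>j. j \<in> {1..N} \<Longrightarrow> \<bar>x j\<bar> \<le> K" and g: "norm (g y) \<le> C * exp (a * ynorm y)"
  shows "norm (dlogQ_x k x y * g y) \<le> (norm v + 2 * exp K) / h * C * exp ((1 + a) * ynorm y)"
proof -
  have "norm (dlogQ_x k x y * g y) \<le> ((norm v + 2 * exp K) / h * exp (ynorm y)) * (C * exp (a * ynorm y))"
    unfolding norm_mult using exp_bounded_coeff_nonneg[where g=g, OF g] h_pos
    by (intro mult_mono norm_dlogQ_x_le assms) auto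
  then show ?thesis by (simp add: algebra_simps exp_add)
qed

lemma has_vector_derivative_Qop:
  assumes k: "k \<in> {1..N}" and g: "admissible g"
  shows "((\<lambda>t. Qop h N v g (x(k := t))) has_vector_derivative
    Qop h N v (\<lambda>y. dlogQ_x k x y * g y) x) (at (x k))"
proof -
  obtain C a where C: "\<And>y. norm (g y) \<le> C * exp (a * ynorm y)"
    using g unfolding admissible_def exp_bounded_def by blast
  define K where "K = (\<Sum>j=1..N. \<bar>x j\<bar>) + 1"
  define Cd where "Cd = (norm v + 2 * exp K) / h"
  have K: "\<bar>(x(k := t)) j\<bar> \<le> K" if "dist t (x k) < 1" "j \<in> {1..N}" for t j
    using that abs_le_sum_abs[OF that(2), of x] abs_le_sum_abs[OF k, of x]
    by (auto simp: K_def dist_real_def)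
  have dg: "norm (dlogQ_x k (x(k := t)) y * g y) \<le> (Cd * C) * exp ((1 + a) * ynorm y)"
    if "dist t (x k) < 1" for t y
    unfolding Cd_def by (rule norm_dlogQ_x_mult_le[OF K[OF that] C])
  have bound: "norm (Qker h N v (x(k := t)) y * (dlogQ_x k (x(k := t)) y * g y)) \<le>
      Cd * C * exp (\<bar>Im v\<bar> / h * (N * K)) *
      (\<Prod>i\<in>{1..<N}. cosh_weight ((1 + a) + \<bar>Im v\<bar> / h) (exp (- K) / h) (y i))"
    if "dist t (x k) < 1" for t y
    by (rule norm_Qker_mult_le[where x="x(k := t)" and g="\<lambda>y. dlogQ_x k (x(k := t)) y * g y",
          OF K[OF that] dg[OF that]])
  have "((\<lambda>t. \<integral>y. Qker h N v (x(k := t)) y * g y \<partial>ymeasure) has_vector_derivative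
      (\<integral>y. Qker h N v (x(k := x k)) y * (dlogQ_x k (x(k := x k)) y * g y) \<partial>ymeasure)) (at (x k))"
  proof (rule has_vector_derivative_integral_dominated[OF _ _ _ _ _ bound])
    show "integrable ymeasure (\<lambda>y. Cd * C * exp (\<bar>Im v\<bar> / h * (N * K)) *
        (\<Prod>i\<in>{1..<N}. cosh_weight ((1 + a) + \<bar>Im v\<bar> / h) (exp (- K) / h) (y i)))"
      using h_pos by (intro integrable_mult_right integrable_prod_cosh_weight) simp
    show "((\<lambda>s. Qker h N v (x(k := s)) y * g y) has_vector_derivative
        Qker h N v (x(k := t)) y * (dlogQ_x k (x(k := t)) y * g y)) (at t)" for t y
      using has_vector_derivative_mult_left[OF has_vector_derivative_Qker_x[OF k, of x y t], of "g y"]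
      by (simp add: ac_simps)
  qed (use integrable_Qker_mult g in \<open>simp_all add: borel_measurable_integrable\<close>)
  then show ?thesis by (simp add: Qop_def)
qed

lemma pd_Qop:
  assumes k: "k \<in> {1..N}" and R: "\<And>x. admissible (R x)" and indep: "\<And>x t y. R (x(k := t)) y = R x y"
  shows "pd k (\<lambda>x. Qop h N v (R x) x) x0 = Qop h N v (\<lambda>y. dlogQ_x k x0 y * R x0 y) x0"
proof -
  have "R (x0(k := t)) = R x0" for t
    using indep by auto
  then show ?thesis
    using vector_derivative_at[OF has_vector_derivative_Qop[OF k R, of x0]] by (simp add: pd_def)
qed

lemma norm_Qker_mult_fun_upd_le:
  assumes g: "admissible g" and k: "k \<in> {1..<N}"
  obtains C b c where "c > 0" "\<And>t. norm (Qker h N v x (y(k := t)) * g (y(k := t))) \<le> C * cosh_weight b c t"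
proof -
  obtain C a where C: "\<And>y. norm (g y) \<le> C * exp (a * ynorm y)"
    using g unfolding admissible_def exp_bounded_def by blast
  define K where "K = (\<Sum>i=1..N. \<bar>x i\<bar>)"
  define b where "b = a + \<bar>Im v\<bar> / h"
  define c where "c = exp (- K) / h"
  have "norm (Qker h N v x (y(k := t)) * g (y(k := t))) \<le>
      (C * exp (\<bar>Im v\<bar> / h * (N * K)) * (\<Prod>i\<in>{1..<N} - {k}. cosh_weight b c (y i))) * cosh_weight b c t"
    for t
  proof -
    have "(\<Prod>i\<in>{1..<N} - {k}. cosh_weight b c ((y(k := t)) i)) = (\<Prod>i\<in>{1..<N} - {k}. cosh_weight b c (y i))"
      by (rule prod.cong) auto
    then have "(\<Prod>i\<in>{1..<N}. cosh_weight b c ((y(k := t)) i)) =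
        cosh_weight b c t * (\<Prod>i\<in>{1..<N} - {k}. cosh_weight b c (y i))"
      using k by (simp add: prod.remove[of _ k])
    moreover have "norm (Qker h N v x (y(k := t)) * g (y(k := t))) \<le>
        C * exp (\<bar>Im v\<bar> / h * (N * K)) * (\<Prod>i\<in>{1..<N}. cosh_weight b c ((y(k := t)) i))"
      unfolding K_def b_def c_def by (rule norm_Qker_mult_le[OF abs_le_sum_abs C])
    ultimately show ?thesis by (simp only: ac_simps)
  qed
  moreover have "c > 0" using h_pos by (simp add: c_def)
  ultimately show ?thesis by (rule that[rotated])
qed

lemma integrable_Qker_mult_fun_upd:
  assumes g: "admissible g" and k: "k \<in> {1..<N}"
  shows "integrable lborel (\<lambda>t. Qker h N v x (y(k := t)) * g (y(k := t)))"
proof -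
  obtain C b c where c: "c > 0" and bound: "\<And>t. norm (Qker h N v x (y(k := t)) * g (y(k := t))) \<le> C * cosh_weight b c t"
    using norm_Qker_mult_fun_upd_le[OF g k] by blast
  have "continuous_on UNIV (\<lambda>y. Qker h N v x y * g y)"
    using g by (auto intro!: continuous_intros continuous_on_Qker simp: admissible_def)
  then have "(\<lambda>t. Qker h N v x (y(k := t)) * g (y(k := t))) \<in> borel_measurable lborel"
    unfolding measurable_lborel2 by (intro borel_measurable_continuous_onI continuous_on_fun_upd)
  with integrable_mult_right[where c=C, OF integrable_cosh_weight[OF c, of b]] show ?thesis
    by (rule Bochner_Integration.integrable_bound) (auto intro!: AE_I2 intro: order_trans[OF bound abs_ge_self])
qed

lemma tendsto_Qker_mult_fun_upd:
  assumes g: "admissible g" and k: "k \<in> {1..<N}"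
  shows "((\<lambda>t. Qker h N v x (y(k := t)) * g (y(k := t))) \<longlongrightarrow> 0) at_top"
    and "((\<lambda>t. Qker h N v x (y(k := t)) * g (y(k := t))) \<longlongrightarrow> 0) at_bot"
proof -
  obtain C b c where c: "c > 0" and bound: "\<And>t. norm (Qker h N v x (y(k := t)) * g (y(k := t))) \<le> C * cosh_weight b c t"
    using norm_Qker_mult_fun_upd_le[OF g k] by blast
  show "((\<lambda>t. Qker h N v x (y(k := t)) * g (y(k := t))) \<longlongrightarrow> 0) at_top"
    "((\<lambda>t. Qker h N v x (y(k := t)) * g (y(k := t))) \<longlongrightarrow> 0) at_bot"
    using tendsto_mult_right_zero[OF cosh_weight_tendsto_0(1)[OF c]]
      tendsto_mult_right_zero[OF cosh_weight_tendsto_0(2)[OF c]]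
    by (auto intro: Lim_null_comparison[OF always_eventually[OF allI[OF bound]]])
qed

lemma Qop_integration_by_parts:
  assumes k: "k \<in> {1..<N}" and m: "admissible m" "\<And>y t. m (y(k := t)) = m y"
    and G: "admissible G" "admissible G'" "\<And>y. ((\<lambda>t. G (y(k := t))) has_vector_derivative G' y) (at (y k))"
  shows "Qop h N v (\<lambda>y. m y * G' y) x = - Qop h N v (\<lambda>y. dlogQ_y k x y * m y * G y) x"
proof -
  define \<psi> where "\<psi> = (\<lambda>y. m y * G' y + dlogQ_y k x y * m y * G y)"
  have adm: "admissible \<psi>" "admissible (\<lambda>y. m y * G y)"
    using m G by (simp_all add: \<psi>_def)
  have "integral\<^sup>L ymeasure (\<lambda>y. Qker h N v x y * \<psi> y) = 0"
  proof (rule integral_PiM_partial_derivative_eq_0[where \<phi>="\<lambda>y. Qker h N v x y * (m y * G y)"])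
    show "((\<lambda>s. Qker h N v x (y(k := s)) * (m (y(k := s)) * G (y(k := s)))) has_vector_derivative
        Qker h N v x (y(k := t)) * \<psi> (y(k := t))) (at t)" for y t
      using has_vector_derivative_mult[OF has_vector_derivative_Qker_y[OF k]
          has_vector_derivative_mult_right[OF G(3)[of "y(k := t)", simplified]]]
      by (simp add: m(2) \<psi>_def algebra_simps)
    show "continuous_on UNIV (\<lambda>t. Qker h N v x (y(k := t)) * \<psi> (y(k := t)))" for y
      using adm(1) unfolding admissible_def
      by (intro continuous_on_fun_upd[of "\<lambda>y. Qker h N v x y * \<psi> y"] continuous_intros continuous_on_Qker) auto
  qed (use k integrable_Qker_mult[OF adm(1)] integrable_Qker_mult_fun_upd[OF adm(1)]
      tendsto_Qker_mult_fun_upd[OF adm(2)] in auto)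
  then have "Qop h N v \<psi> x = 0" by (simp add: Qop_def)
  then show ?thesis
    using Qop_add[of "\<lambda>y. m y * G' y" "\<lambda>y. dlogQ_y k x y * m y * G y" x] m G
    by (simp add: \<psi>_def eq_neg_iff_add_eq_0)
qed

lemma Qop_momentum_x:
  assumes k: "k \<in> {1..N}" and R: "\<And>x. admissible (R x)" and indep: "\<And>x t y. R (x(k := t)) y = R x y"
  shows "u * Qop h N v (R x) x + \<i> * of_real h * pd k (\<lambda>x. Qop h N v (R x) x) x =
    Qop h N v (\<lambda>y. (u + \<i> * of_real h * dlogQ_x k x y) * R x y) x"
proof -
  have "u * Qop h N v (R x) x + \<i> * of_real h * pd k (\<lambda>x. Qop h N v (R x) x) x =
      Qop h N v (\<lambda>y. u * R x y + \<i> * of_real h * (dlogQ_x k x y * R x y)) x"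
    using R[of x] by (simp add: pd_Qop[OF k R indep] Qop_add Qop_cmult)
  also have "\<dots> = Qop h N v (\<lambda>y. (u + \<i> * of_real h * dlogQ_x k x y) * R x y) x"
    by (simp add: algebra_simps)
  finally show ?thesis .
qed

lemma Qop_momentum_y:
  assumes k: "k \<in> {1..<N}" and m: "admissible m" "\<And>y t. m (y(k := t)) = m y"
    and G: "admissible G" "admissible G'" "\<And>y. ((\<lambda>t. G (y(k := t))) has_vector_derivative G' y) (at (y k))"
  shows "Qop h N v (\<lambda>y. m y * (u * G y + \<i> * of_real h * G' y)) x =
    Qop h N v (\<lambda>y. m y * (u - \<i> * of_real h * dlogQ_y k x y) * G y) x"
proof -
  have "Qop h N v (\<lambda>y. m y * (u * G y + \<i> * of_real h * G' y)) x =
      Qop h N v (\<lambda>y. u * (m y * G y) + \<i> * of_real h * (m y * G' y)) x"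
    by (simp add: algebra_simps)
  also have "\<dots> = u * Qop h N v (\<lambda>y. m y * G y) x + \<i> * of_real h * Qop h N v (\<lambda>y. m y * G' y) x"
    using m G by (simp add: Qop_add Qop_cmult)
  also have "\<dots> = u * Qop h N v (\<lambda>y. m y * G y) x - \<i> * of_real h * Qop h N v (\<lambda>y. dlogQ_y k x y * m y * G y) x"
    by (simp add: Qop_integration_by_parts[OF k m G])
  also have "\<dots> = Qop h N v (\<lambda>y. u * (m y * G y) - \<i> * of_real h * (dlogQ_y k x y * m y * G y)) x"
    using m G by (simp add: Qop_diff Qop_cmult)
  also have "\<dots> = Qop h N v (\<lambda>y. m y * (u - \<i> * of_real h * dlogQ_y k x y) * G y) x"
    by (simp add: algebra_simps)
  finally show ?thesis .
qed

lemma admissible_continuant_x [simp]: "admissible (\<lambda>y. continuant_x w (alpha x y) (beta x y) n)"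
  by (induction n rule: induct_nat_012) simp_all

lemma admissible_continuant_y [simp]: "admissible (\<lambda>y. continuant_y w (alpha x y) (beta x y) n)"
  by (induction n rule: induct_nat_012) simp_all

lemma continuant_x_fun_upd:
  "n < k \<Longrightarrow> continuant_x w (alpha (x(k := t)) y) (beta (x(k := t)) y) n = continuant_x w (alpha x y) (beta x y) n"
  by (rule continuant_x_cong) (auto simp: alpha_def beta_def)

lemma continuant_x_Suc_Suc:
  assumes "Suc (Suc n) \<le> N"
  shows "continuant_x (u - v) (alpha x y) (beta x y) (Suc (Suc n)) =
    (u + \<i> * of_real h * dlogQ_x (Suc (Suc n)) x y) * continuant_x (u - v) (alpha x y) (beta x y) (Suc n)
    - of_real (exp (x (Suc n) - x (Suc (Suc n)))) * continuant_x (u - v) (alpha x y) (beta x y) n"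
  using assms alpha_mult_beta[of "Suc n" x y] unfolding dlogQ_x_eq by simp

lemma continuant_y_Suc_Suc:
  assumes "Suc (Suc n) < N"
  shows "continuant_y (u - v) (alpha x y) (beta x y) (Suc (Suc n)) =
    (u - \<i> * of_real h * dlogQ_y (Suc (Suc n)) x y) * continuant_y (u - v) (alpha x y) (beta x y) (Suc n)
    - of_real (exp (y (Suc n) - y (Suc (Suc n)))) * continuant_y (u - v) (alpha x y) (beta x y) n"
  using assms beta_mult_alpha_Suc[of "Suc n" x y] unfolding dlogQ_y_eq by simp

end

section \<open>The two sides of the identity\<close>

locale toda_chain = toda_kernel +
  fixes f :: "(nat \<Rightarrow> real) \<Rightarrow> complex" and u :: complex
  assumes pds_differentiable: "\<And>ks k y. set ks \<subseteq> {1..<N} \<Longrightarrow> length ks < N - 1 \<Longrightarrow> k \<in> {1..<N} \<Longrightarrow>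
      (\<lambda>t. pds ks f (y(k := t))) differentiable (at (y k))"
    and pds_continuous: "\<And>ks. set ks \<subseteq> {1..<N} \<Longrightarrow> length ks \<le> N - 1 \<Longrightarrow> continuous_on UNIV (pds ks f)"
    and pds_growth: "\<And>ks. set ks \<subseteq> {1..<N} \<Longrightarrow> length ks \<le> N - 1 \<Longrightarrow>
      \<exists>C a. \<forall>y. norm (pds ks f y) \<le> C * exp (a * (\<Sum>i=1..<N. \<bar>y i\<bar>))"
begin

definition coefficient :: "nat \<Rightarrow> ((nat \<Rightarrow> real) \<Rightarrow> complex) \<Rightarrow> bool" where
  "coefficient n c \<longleftrightarrow> admissible c \<and> (\<forall>y j t. n < j \<longrightarrow> c (y(j := t)) = c y)"

text \<open>Combinations of derivatives of \<open>f\<close> of order at most \<open>n\<close> in \<open>y 1, \<dots>, y n\<close>; the operator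
  \<open>A_n(u)\<close> maps \<open>f\<close> into this class, on which the hypotheses on \<open>f\<close> provide admissibility and
  differentiability in \<open>y (n + 1)\<close>.\<close>
inductive derived :: "nat \<Rightarrow> ((nat \<Rightarrow> real) \<Rightarrow> complex) \<Rightarrow> bool" where
  pds: "set ks \<subseteq> {1..n} \<Longrightarrow> length ks \<le> n \<Longrightarrow> derived n (pds ks f)"
| scale: "derived n g \<Longrightarrow> coefficient n c \<Longrightarrow> derived n (\<lambda>y. c y * g y)"
| add: "derived n g1 \<Longrightarrow> derived n g2 \<Longrightarrow> derived n (\<lambda>y. g1 y + g2 y)"

lemma derived_f: "derived n f"
  using derived.pds[of "[]" n] by simp

lemma derived_Suc: "derived n g \<Longrightarrow> derived (Suc n) g"
proof (induction rule: derived.induct)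
  case (pds ks n)
  then show ?case by (intro derived.pds) auto
next
  case (scale n g c)
  then show ?case by (auto intro: derived.scale simp: coefficient_def)
qed (rule derived.add)

lemma admissible_derived: "derived n g \<Longrightarrow> n \<le> N - 1 \<Longrightarrow> admissible g"
proof (induction rule: derived.induct)
  case (pds ks n)
  then have "set ks \<subseteq> {1..<N}" "length ks \<le> N - 1" by (auto simp: subset_iff)
  then show ?case
    unfolding admissible_def exp_bounded_def ynorm_def using pds_continuous pds_growth by auto
qed (auto simp: coefficient_def)

lemma derived_has_vector_derivative:
  "derived n g \<Longrightarrow> Suc n \<le> N - 1 \<Longrightarrow>
    ((\<lambda>t. g (y(Suc n := t))) has_vector_derivative pd (Suc n) g y) (at (y (Suc n)))"
proof (induction arbitrary: y rule: derived.induct)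
  case (pds ks n)
  then have "(\<lambda>t. pds ks f (y(Suc n := t))) differentiable (at (y (Suc n)))"
    by (intro pds_differentiable) (auto simp: subset_iff)
  then show ?case unfolding pd_def vector_derivative_works .
next
  case (scale n g c)
  then have "c (y(Suc n := t)) = c y" for t by (simp add: coefficient_def)
  then have D: "((\<lambda>t. c (y(Suc n := t)) * g (y(Suc n := t))) has_vector_derivative c y * pd (Suc n) g y)
      (at (y (Suc n)))"
    using has_vector_derivative_mult_right[OF scale.IH[OF scale.prems], of "c y"] by (simp only:)
  then show ?case by (simp only: pd_eqI[OF D])
next
  case (add n g1 g2)
  then have D: "((\<lambda>t. g1 (y(Suc n := t)) + g2 (y(Suc n := t))) has_vector_derivative
      pd (Suc n) g1 y + pd (Suc n) g2 y) (at (y (Suc n)))"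
    by (intro has_vector_derivative_add)
  then show ?case by (simp only: pd_eqI[OF D])
qed

lemma derived_pd: "derived n g \<Longrightarrow> Suc n \<le> N - 1 \<Longrightarrow> derived (Suc n) (pd (Suc n) g)"
proof (induction rule: derived.induct)
  case (pds ks n)
  then have "set (Suc n # ks) \<subseteq> {1..Suc n}"
    by (auto simp: subset_iff)
  with derived.pds[of "Suc n # ks" "Suc n"] pds.hyps(2) show ?case by simp
next
  case (scale n g c)
  have indep: "c (y(Suc n := t)) = c y" for y t
    using scale.hyps(2) by (simp add: coefficient_def)
  have "pd (Suc n) (\<lambda>y. c y * g y) y = c y * pd (Suc n) g y" for y
    by (rule pd_eqI, unfold indep)
      (intro has_vector_derivative_mult_right derived_has_vector_derivative scale.hyps scale.prems)
  then show ?case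
    using scale by (auto intro: derived.scale simp: coefficient_def)
next
  case (add n g1 g2)
  have "pd (Suc n) (\<lambda>y. g1 y + g2 y) y = pd (Suc n) g1 y + pd (Suc n) g2 y" for y
    by (intro pd_eqI has_vector_derivative_add derived_has_vector_derivative add.hyps add.prems)
  then show ?case
    using add by (auto intro: derived.add)
qed

lemma coefficient_const: "coefficient n (\<lambda>y. c)"
  by (simp add: coefficient_def)

lemma derived_Aop: "n \<le> N - 1 \<Longrightarrow> derived n (Aop h n u f)"
proof (induction n rule: induct_nat_012)
  case 0
  then show ?case by (simp add: derived_f)
next
  case 1
  then have "derived 1 (pd 1 f)"
    using derived_pd[OF derived_f[of 0]] by simp
  then have "derived 1 (\<lambda>y. u * f y + \<i> * of_real h * pd 1 f y)"
    by (intro derived.add derived.scale derived_f coefficient_const)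
  then show ?case by simp
next
  case (ge2 n)
  have A1: "derived (Suc n) (Aop h (Suc n) u f)" and A0: "derived n (Aop h n u f)"
    using ge2 by simp_all
  have "coefficient (Suc (Suc n)) (\<lambda>y. - of_real (exp (y (Suc n) - y (Suc (Suc n)))))"
    using ge2.prems admissible_exp_coordinates[of "Suc n" "Suc (Suc n)"]
    unfolding coefficient_def by auto
  then have "derived (Suc (Suc n)) (\<lambda>y. (u * Aop h (Suc n) u f y
      + \<i> * of_real h * pd (Suc (Suc n)) (Aop h (Suc n) u f) y)
      + (- of_real (exp (y (Suc n) - y (Suc (Suc n))))) * Aop h n u f y)"
    using ge2.prems
    by (intro derived.add derived.scale derived_Suc[OF A1] derived_pd[OF A1] derived_Suc[OF derived_Suc[OF A0]]
        coefficient_const)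
  then show ?case by simp
qed

lemma admissible_f [simp]: "admissible f"
  using admissible_derived[OF derived_f[of 0]] by simp

lemma admissible_Aop [simp]: "n \<le> N - 1 \<Longrightarrow> admissible (Aop h n u f)"
  using admissible_derived[OF derived_Aop] .

lemma Aop_Qop:
  "n \<le> N \<Longrightarrow> Aop h n u (Qop h N v f) x = Qop h N v (\<lambda>y. continuant_x (u - v) (alpha x y) (beta x y) n * f y) x"
proof (induction n arbitrary: x rule: induct_nat_012)
  case 0
  then show ?case by simp
next
  case 1
  show ?case
    using Qop_momentum_x[where k=1 and R="\<lambda>_. f" and u=u and x=x] N_ge_2
    by (simp add: dlogQ_x_eq beta_def)
next
  case (ge2 n)
  let ?P = "\<lambda>x y j. continuant_x (u - v) (alpha x y) (beta x y) j"
  let ?e = "of_real (exp (x (Suc n) - x (Suc (Suc n)))) :: complex"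
  let ?d = "\<lambda>y. u + \<i> * of_real h * dlogQ_x (Suc (Suc n)) x y"
  have "Aop h (Suc n) u (Qop h N v f) = (\<lambda>x. Qop h N v (\<lambda>y. ?P x y (Suc n) * f y) x)"
    using ge2 by auto
  then have "Aop h (Suc (Suc n)) u (Qop h N v f) x =
      Qop h N v (\<lambda>y. ?d y * (?P x y (Suc n) * f y)) x - ?e * Qop h N v (\<lambda>y. ?P x y n * f y) x"
    using ge2 Qop_momentum_x[where k="Suc (Suc n)" and R="\<lambda>x y. ?P x y (Suc n) * f y" and u=u and x=x]
    by (simp add: continuant_x_fun_upd)
  also have "\<dots> = Qop h N v (\<lambda>y. ?d y * (?P x y (Suc n) * f y) - ?e * (?P x y n * f y)) x"
    by (simp add: Qop_diff Qop_cmult)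
  also have "\<dots> = Qop h N v (\<lambda>y. ?P x y (Suc (Suc n)) * f y) x"
    unfolding continuant_x_Suc_Suc[OF ge2.prems] by (simp add: algebra_simps)
  finally show ?case .
qed

lemma Qop_mult_Aop:
  "n \<le> N - 1 \<Longrightarrow> admissible m \<Longrightarrow> (\<And>y j t. 1 \<le> j \<Longrightarrow> j \<le> n \<Longrightarrow> m (y(j := t)) = m y) \<Longrightarrow>
    Qop h N v (\<lambda>y. m y * Aop h n u f y) x =
    Qop h N v (\<lambda>y. m y * continuant_y (u - v) (alpha x y) (beta x y) n * f y) x"
proof (induction n arbitrary: m rule: induct_nat_012)
  case 0
  then show ?case by simp
next
  case (1 m)
  have "m (y(1 := t)) = m y" for y t
    by (rule "1.prems"(3)) simp_all
  then show ?case
    using Qop_momentum_y[where k=1 and m=m and G=f and G'="pd 1 f" and u=u and x=x] "1.prems"(1,2) N_ge_2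
      derived_has_vector_derivative[OF derived_f[of 0]] admissible_derived[OF derived_pd[OF derived_f[of 0]]]
    by (simp add: dlogQ_y_eq)
next
  case (ge2 n m)
  let ?k = "Suc (Suc n)"
  let ?A1 = "Aop h (Suc n) u f" and ?A0 = "Aop h n u f"
  let ?T = "\<lambda>j y. continuant_y (u - v) (alpha x y) (beta x y) j"
  let ?m1 = "\<lambda>y. m y * (u - \<i> * of_real h * dlogQ_y ?k x y)"
    and ?m2 = "\<lambda>y. m y * of_real (exp (y (Suc n) - y ?k))"
  have A1: "derived (Suc n) ?A1" using ge2.prems by (intro derived_Aop) auto
  have adm: "admissible ?A1" "admissible ?A0" "admissible (pd ?k ?A1)" "admissible ?m1" "admissible ?m2"
    using ge2.prems admissible_derived[OF derived_pd[OF A1]] admissible_exp_coordinates[of "Suc n" ?k] by auto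
  have "m (y(?k := t)) = m y" for y t
    by (rule ge2.prems(3)) simp_all
  then have momentum: "Qop h N v (\<lambda>y. m y * (u * ?A1 y + \<i> * of_real h * pd ?k ?A1 y)) x =
      Qop h N v (\<lambda>y. ?m1 y * ?A1 y) x"
    using Qop_momentum_y[where k="?k" and m=m and G="?A1" and G'="pd ?k ?A1" and u=u and x=x]
      ge2.prems adm derived_has_vector_derivative[OF A1]
    by simp
  have IH1: "Qop h N v (\<lambda>y. ?m1 y * ?A1 y) x = Qop h N v (\<lambda>y. ?m1 y * ?T (Suc n) y * f y) x"
    using ge2.prems adm by (intro ge2.IH(2)) (auto simp: dlogQ_y_def alpha_def beta_def)
  have IH0: "Qop h N v (\<lambda>y. ?m2 y * ?A0 y) x = Qop h N v (\<lambda>y. ?m2 y * ?T n y * f y) x"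
    using ge2.prems adm by (intro ge2.IH(1)) auto
  have "Qop h N v (\<lambda>y. m y * Aop h ?k u f y) x =
      Qop h N v (\<lambda>y. m y * (u * ?A1 y + \<i> * of_real h * pd ?k ?A1 y) - ?m2 y * ?A0 y) x"
    by (simp add: algebra_simps)
  also have "\<dots> = Qop h N v (\<lambda>y. ?m1 y * ?T (Suc n) y * f y) x - Qop h N v (\<lambda>y. ?m2 y * ?T n y * f y) x"
    using ge2.prems adm by (simp add: Qop_diff momentum IH1 IH0)
  also have "\<dots> = Qop h N v (\<lambda>y. ?m1 y * ?T (Suc n) y * f y - ?m2 y * ?T n y * f y) x"
    using ge2.prems adm by (simp add: Qop_diff)
  also have "\<dots> = Qop h N v (\<lambda>y. m y * ?T ?k y * f y) x"
    using ge2.prems by (subst continuant_y_Suc_Suc) (simp_all add: algebra_simps)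
  finally show ?case .
qed

end

theorem lemma2:
  fixes N :: nat and h :: real and v u :: complex and f :: "(nat \<Rightarrow> real) \<Rightarrow> complex"
  assumes N: "N \<ge> 2" and h: "h > 0"
    and dep: "\<And>y y'. (\<forall>i\<in>{1..<N}. y i = y' i) \<Longrightarrow> f y = f y'"
    and diff: "\<And>ks k y. set ks \<subseteq> {1..<N} \<Longrightarrow> length ks < N - 1 \<Longrightarrow> k \<in> {1..<N} \<Longrightarrow>
                 (\<lambda>t. pds ks f (y(k := t))) differentiable (at (y k))"
    and cont: "\<And>ks. set ks \<subseteq> {1..<N} \<Longrightarrow> length ks \<le> N - 1 \<Longrightarrow> continuous_on UNIV (pds ks f)"
    and growth: "\<And>ks. set ks \<subseteq> {1..<N} \<Longrightarrow> length ks \<le> N - 1 \<Longrightarrow>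
                 \<exists>C a. \<forall>y. norm (pds ks f y) \<le> C * exp (a * (\<Sum>i=1..<N. \<bar>y i\<bar>))"
  shows "Aop h N u (Qop h N v f) x = (u - v) * Qop h N v (Aop h (N - 1) u f) x"
proof -
  interpret toda_chain N h v f u
    by unfold_locales (use N h diff cont growth in auto)
  have "continuant_x (u - v) (alpha x y) (beta x y) N = (u - v) * continuant_y (u - v) (alpha x y) (beta x y) (N - 1)"
    for y
  proof -
    obtain n where n: "N = Suc (Suc n)" using N by (metis add_2_eq_Suc le_Suc_ex)
    have "alpha x y N = 0" "beta x y N = 0" "beta x y 0 = 0"
      by (simp_all add: alpha_def beta_def)
    then show ?thesis
      using continuant_x_eq_continuant_y[of "beta x y" "u - v" "alpha x y" N] by (simp add: n)
  qed
  then have "Aop h N u (Qop h N v f) x =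
      (u - v) * Qop h N v (\<lambda>y. 1 * continuant_y (u - v) (alpha x y) (beta x y) (N - 1) * f y) x"
    using Aop_Qop[of N x] by (simp add: Qop_cmult mult.assoc)
  also have "\<dots> = (u - v) * Qop h N v (\<lambda>y. 1 * Aop h (N - 1) u f y) x"
    by (subst Qop_mult_Aop) simp_all
  finally show ?thesis by simp
qed

end
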